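(* Let $n\ge 2$ and let $\ell_1,\ell_2,\ell_3\subset\mathbb R^n$ be lines through the origin. The following are equivalent: (1) $\dim(\ell_1+\ell_2+\ell_3)=2$; (2) for every triple of points $z_1,z_2,z_3\in\mathbb R^n$ there exists a rigid motion $g$ of $\mathbb R^n$ with $g(z_j)\in\ell_j$ for each $j=1,2,3$.
   Context: A rigid motion of $\mathbb R^n$ is a map $x\mapsto Rx+T$ with $R\in\mathrm{SO}(n)$ and $T\in\mathbb R^n$. *)

theory Defs
  imports "HOL-Analysis.Analysis"
begin

definition line_through_origin :: "(real^'n) set \<Rightarrow> bool" where
  "line_through_origin L \<longleftrightarrow> (\<exists>v. v \<noteq> 0 \<and> L = span {v})"

definition rigid_motion :: "(real^'n \<Rightarrow> real^'n) \<Rightarrow> bool" where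
  "rigid_motion g \<longleftrightarrow>
     (\<exists>(R::real^'n^'n) T. orthogonal_matrix R \<and> det R = 1 \<and> (\<forall>x. g x = R *v x + T))"

end

theory Submission
  imports Defs
begin

text \<open>Write \<open>l\<^sub>j = span {v\<^sub>j}\<close>. If the \<open>v\<^sub>j\<close> span a plane \<open>P\<close>, first rotate
  \<open>z\<^sub>2 - z\<^sub>1\<close> and \<open>z\<^sub>3 - z\<^sub>1\<close> into \<open>P\<close>; it remains to find a rotation \<open>\<rho>\<^sub>\<theta>\<close> of \<open>P\<close>
  and \<open>t\<close> with \<open>t v\<^sub>1 + \<rho>\<^sub>\<theta> a \<in> l\<^sub>2\<close> and \<open>t v\<^sub>1 + \<rho>\<^sub>\<theta> b \<in> l\<^sub>3\<close>. These are two equations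
  linear in \<open>t\<close> and in \<open>(cos \<theta>, sin \<theta>)\<close>; eliminating \<open>t\<close> leaves a single equation
  \<open>\<alpha> cos \<theta> + \<beta> sin \<theta> = 0\<close>, which always has a solution.
  Conversely, if the lines lie on a single line, the orthonormal points \<open>0, e\<^sub>i, e\<^sub>j\<close> cannot be
  moved onto it; if they span a \<open>3\<close>-space, the collinear points \<open>0, a, 2a\<close> would give a
  nontrivial linear relation between vectors of three independent lines.\<close>

lemma rigid_motion_iff:
  fixes g :: "real^'n \<Rightarrow> real^'n"
  shows "rigid_motion g \<longleftrightarrow>
    (\<exists>f T. orthogonal_transformation f \<and> det (matrix f) = 1 \<and> (\<forall>x. g x = f x + T))"
proof
  assume "rigid_motion g"
  then obtain R T where R: "orthogonal_matrix R" "det R = 1" "\<forall>x. g x = R *v x + T"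
    unfolding rigid_motion_def by blast
  have "orthogonal_transformation (\<lambda>x. R *v x)"
    using R(1) by (simp add: orthogonal_transformation_matrix)
  with R show "\<exists>f T. orthogonal_transformation f \<and> det (matrix f) = 1 \<and> (\<forall>x. g x = f x + T)"
    by (intro exI[of _ "\<lambda>x. R *v x"] exI[of _ T]) simp
next
  assume "\<exists>f T. orthogonal_transformation f \<and> det (matrix f) = 1 \<and> (\<forall>x. g x = f x + T)"
  then obtain f T where f: "orthogonal_transformation f" "det (matrix f) = 1" "\<forall>x. g x = f x + T"
    by blast
  then have "orthogonal_matrix (matrix f)" "\<forall>x. g x = matrix f *v x + T"
    by (simp_all add: orthogonal_transformation_matrix matrix_works)
  with f(2) show "rigid_motion g"
    unfolding rigid_motion_def by blast
qed

lemma sum_of_lines_eq_span: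
  "{x + y + z | x y z. x \<in> span {u} \<and> y \<in> span {v} \<and> z \<in> span {w}} = span {u, v, w}"
proof -
  have "{u, v, w} = {u} \<union> ({v} \<union> {w})" by auto
  show ?thesis
    unfolding \<open>{u, v, w} = _\<close> span_Un by (auto simp: add.assoc)
qed

definition reflect :: "'a::real_inner \<Rightarrow> 'a \<Rightarrow> 'a" where
  "reflect u x = x - (2 * (x \<bullet> u)) *\<^sub>R u"

lemma linear_reflect: "linear (reflect u)"
  unfolding reflect_def by (intro linearI) (auto simp: inner_add_left algebra_simps)

lemma reflect_orthogonal: "x \<bullet> u = 0 \<Longrightarrow> reflect u x = x"
  by (simp add: reflect_def)

lemma reflect_in_span: "u \<in> span S \<Longrightarrow> x \<in> span S \<Longrightarrow> reflect u x \<in> span S"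
  unfolding reflect_def by (intro span_diff span_mul)

lemma orthogonal_transformation_reflect:
  assumes "norm u = 1" shows "orthogonal_transformation (reflect u)"
proof -
  have "u \<bullet> u = 1" using assms by (simp add: dot_square_norm)
  then show ?thesis
    unfolding orthogonal_transformation_def
    by (auto simp: linear_reflect reflect_def inner_diff_left inner_diff_right inner_commute algebra_simps)
qed

lemma reflect_conjugate:
  assumes "orthogonal_transformation f"
  shows "reflect (f u) \<circ> f = f \<circ> reflect u"
proof
  fix x
  interpret linear f using assms orthogonal_transformation by blast
  have "f x \<bullet> f u = x \<bullet> u" using assms orthogonal_transformation_def by blast
  then show "(reflect (f u) \<circ> f) x = (f \<circ> reflect u) x"
    by (simp add: reflect_def diff scale)
qed

lemma det_matrix_reflect_axis: "det (matrix (reflect (axis k (1::real)) :: real^'n \<Rightarrow> real^'n)) = -1"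
proof -
  have diag: "matrix (reflect (axis k (1::real)) :: real^'n \<Rightarrow> real^'n) $ i $ j =
      (if i = j then if i = k then -1 else 1 else 0)" for i j
    by (simp add: matrix_def reflect_def inner_axis_axis, auto simp: axis_def)
  then have "det (matrix (reflect (axis k (1::real)) :: real^'n \<Rightarrow> real^'n)) =
      (\<Prod>i\<in>UNIV. if i = k then -1 else 1)"
    by (subst det_diagonal) (auto intro: prod.cong)
  then show ?thesis by (simp add: prod.If_cases)
qed

lemma det_matrix_reflect:
  fixes u :: "real^'n"
  assumes "norm u = 1" shows "det (matrix (reflect u)) = -1"
proof -
  obtain k :: 'n where True by simp
  obtain f :: "real^'n \<Rightarrow> real^'n" where f: "orthogonal_transformation f" "f (axis k 1) = u"
    using orthogonal_transformation_exists[of "axis k (1::real)" u] assms by auto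
  have "linear f" using f orthogonal_transformation by blast
  have "matrix (reflect u) ** matrix f = matrix f ** matrix (reflect (axis k 1))"
    using reflect_conjugate[OF f(1), of "axis k 1"]
    by (simp add: f(2) flip: matrix_compose[OF \<open>linear f\<close> linear_reflect]
        matrix_compose[OF linear_reflect \<open>linear f\<close>])
  then have "det (matrix (reflect u)) * det (matrix f) = - det (matrix f)"
    by (metis det_mul det_matrix_reflect_axis mult_minus1_right)
  moreover have "det (matrix f) \<noteq> 0" using orthogonal_transformation_det[OF f(1)] by auto
  ultimately show ?thesis by (metis mult_cancel_right mult_minus_left mult_1)
qed

lemma reflect_exchange:
  assumes "norm x = norm y" "x \<noteq> y"
  shows "reflect ((x - y) /\<^sub>R norm (x - y)) x = y"
proof -
  define e where "e = x - y"
  have "x \<bullet> x = y \<bullet> y" using assms(1) by (simp add: dot_square_norm)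
  then have ee: "e \<bullet> e = 2 * (x \<bullet> e)"
    by (simp add: e_def inner_diff_left inner_diff_right inner_commute)
  then have "2 * (x \<bullet> e) = norm e ^ 2" by (simp add: dot_square_norm)
  moreover have "norm e \<noteq> 0" using assms(2) by (simp add: e_def)
  ultimately have "reflect (e /\<^sub>R norm e) x = x - e"
    by (simp add: reflect_def power2_eq_square field_simps)
  then show ?thesis by (simp add: e_def)
qed

lemma orthogonal_transformation_exchange:
  fixes x y :: "'a::real_inner"
  assumes "norm x = norm y"
  obtains f where "orthogonal_transformation f" "f x = y"
    "\<And>z. z \<bullet> x = 0 \<Longrightarrow> z \<bullet> y = 0 \<Longrightarrow> f z = z"
proof (cases "x = y")
  case True
  then show ?thesis
    by (intro that[of id]) (auto simp: orthogonal_transformation_id[unfolded id_def[symmetric]])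
next
  case False
  define u where "u = (x - y) /\<^sub>R norm (x - y)"
  have "norm u = 1" using False by (simp add: u_def)
  moreover have "reflect u x = y" using reflect_exchange[OF assms False] by (simp add: u_def)
  moreover have "reflect u z = z" if "z \<bullet> x = 0" "z \<bullet> y = 0" for z
    using that by (intro reflect_orthogonal) (simp add: u_def inner_diff_right)
  ultimately show ?thesis using that orthogonal_transformation_reflect by blast
qed

lemma exists_cos_sin_root:
  fixes a b :: real
  obtains \<theta> where "a * cos \<theta> + b * sin \<theta> = 0"
proof (cases "b = 0")
  case True
  then show ?thesis using that[of "pi/2"] by simp
next
  case False
  define \<theta> where "\<theta> = arctan (- a / b)"
  have "sin \<theta> = - a / b * cos \<theta>"
    using tan_arctan[of "- a / b"] cos_arctan_not_zero[of "- a / b"]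
    by (simp add: \<theta>_def tan_def field_simps)
  then show ?thesis using that[of \<theta>] False by simp
qed

lemma exists_angle_solving_pair:
  fixes d1 d2 a1 a2 b1 b2 :: real
  assumes "d1 \<noteq> 0 \<or> d2 \<noteq> 0"
  obtains \<theta> t where "t * d1 + a1 * cos \<theta> + b1 * sin \<theta> = 0"
    "t * d2 + a2 * cos \<theta> + b2 * sin \<theta> = 0"
proof -
  obtain \<theta> where \<theta>: "(d2 * a1 - d1 * a2) * cos \<theta> + (d2 * b1 - d1 * b2) * sin \<theta> = 0"
    using exists_cos_sin_root by blast
  define r1 where "r1 = a1 * cos \<theta> + b1 * sin \<theta>"
  define r2 where "r2 = a2 * cos \<theta> + b2 * sin \<theta>"
  have "d2 * r1 = d1 * r2" using \<theta> by (simp add: r1_def r2_def algebra_simps)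
  then have "\<exists>t. t * d1 + r1 = 0 \<and> t * d2 + r2 = 0"
  proof (cases "d1 = 0")
    case True
    then show ?thesis using assms \<open>d2 * r1 = d1 * r2\<close>
      by (intro exI[of _ "- r2 / d2"]) simp
  next
    case False
    then show ?thesis using \<open>d2 * r1 = d1 * r2\<close>
      by (intro exI[of _ "- r1 / d1"]) (simp add: field_simps)
  qed
  then show ?thesis using that by (auto simp: r1_def r2_def add.assoc)
qed

lemma span_pair_explicit:
  "x \<in> span {u, v} \<longleftrightarrow> (\<exists>a b. x = a *\<^sub>R u + b *\<^sub>R v)"
proof
  assume "x \<in> span {u, v}"
  then obtain a b where "x - a *\<^sub>R u = b *\<^sub>R v" by (auto simp: span_insert span_singleton)
  then show "\<exists>a b. x = a *\<^sub>R u + b *\<^sub>R v" by (metis diff_add_cancel add.commute)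
qed (auto intro: span_add span_mul span_base)

locale orthonormal_pair =
  fixes u1 u2 :: "'a::real_inner"
  assumes norm_u1: "norm u1 = 1" and norm_u2: "norm u2 = 1" and orthogonal_u1_u2: "u1 \<bullet> u2 = 0"

text \<open>The rotation by \<open>\<theta>\<close> of the plane of \<open>u1, u2\<close>, fixing its orthogonal complement, as a
  product of two reflections; this makes orthogonality and determinant \<open>1\<close> evident.\<close>
definition plane_rotation :: "'a::real_inner \<Rightarrow> 'a \<Rightarrow> real \<Rightarrow> 'a \<Rightarrow> 'a" where
  "plane_rotation u1 u2 \<theta> = reflect (cos (\<theta>/2) *\<^sub>R u1 + sin (\<theta>/2) *\<^sub>R u2) \<circ> reflect u1"

definition wedge :: "'a::real_inner \<Rightarrow> 'a \<Rightarrow> 'a \<Rightarrow> 'a \<Rightarrow> real" where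
  "wedge u1 u2 x y = (x \<bullet> u1) * (y \<bullet> u2) - (x \<bullet> u2) * (y \<bullet> u1)"

context orthonormal_pair
begin

lemma inner_basis [simp]: "u1 \<bullet> u1 = 1" "u2 \<bullet> u2 = 1" "u1 \<bullet> u2 = 0" "u2 \<bullet> u1 = 0"
  using norm_u1 norm_u2 orthogonal_u1_u2 by (simp_all add: dot_square_norm inner_commute)

lemma norm_unit_in_plane: "norm (cos \<alpha> *\<^sub>R u1 + sin \<alpha> *\<^sub>R u2) = 1"
proof -
  have "(cos \<alpha> *\<^sub>R u1 + sin \<alpha> *\<^sub>R u2) \<bullet> (cos \<alpha> *\<^sub>R u1 + sin \<alpha> *\<^sub>R u2) = 1"
    by (simp add: inner_add_left inner_add_right flip: power2_eq_square)
  then show ?thesis by (simp add: norm_eq_sqrt_inner)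
qed

lemma orthogonal_transformation_plane_rotation:
  "orthogonal_transformation (plane_rotation u1 u2 \<theta>)"
  unfolding plane_rotation_def
  by (intro orthogonal_transformation_compose orthogonal_transformation_reflect
      norm_unit_in_plane norm_u1)

lemma inner_plane_rotation:
  "plane_rotation u1 u2 \<theta> x \<bullet> u1 = cos \<theta> * (x \<bullet> u1) - sin \<theta> * (x \<bullet> u2)"
  "plane_rotation u1 u2 \<theta> x \<bullet> u2 = sin \<theta> * (x \<bullet> u1) + cos \<theta> * (x \<bullet> u2)"
proof -
  define c s where "c = cos (\<theta>/2)" and "s = sin (\<theta>/2)"
  have cos1: "cos \<theta> = 2 * c^2 - 1" and cos2: "cos \<theta> = 1 - 2 * s^2"
    and sin: "sin \<theta> = 2 * s * c"
    using cos_double_cos[of "\<theta>/2"] cos_double_sin[of "\<theta>/2"] sin_double[of "\<theta>/2"]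
    by (simp_all add: c_def s_def)
  have "plane_rotation u1 u2 \<theta> x \<bullet> u1 = (2 * c^2 - 1) * (x \<bullet> u1) - 2 * s * c * (x \<bullet> u2)"
    unfolding plane_rotation_def c_def [symmetric] s_def [symmetric]
    by (simp add: reflect_def inner_add_left inner_add_right inner_diff_left
        power2_eq_square algebra_simps)
  then show "plane_rotation u1 u2 \<theta> x \<bullet> u1 = cos \<theta> * (x \<bullet> u1) - sin \<theta> * (x \<bullet> u2)"
    unfolding cos1 sin by simp
  have "plane_rotation u1 u2 \<theta> x \<bullet> u2 = 2 * s * c * (x \<bullet> u1) + (1 - 2 * s^2) * (x \<bullet> u2)"
    unfolding plane_rotation_def c_def [symmetric] s_def [symmetric]
    by (simp add: reflect_def inner_add_left inner_add_right inner_diff_left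
        power2_eq_square algebra_simps)
  then show "plane_rotation u1 u2 \<theta> x \<bullet> u2 = sin \<theta> * (x \<bullet> u1) + cos \<theta> * (x \<bullet> u2)"
    unfolding cos2 sin by simp
qed

lemma plane_rotation_in_plane:
  assumes "x \<in> span {u1, u2}" shows "plane_rotation u1 u2 \<theta> x \<in> span {u1, u2}"
proof -
  have "u1 \<in> span {u1, u2}" "u2 \<in> span {u1, u2}" by (simp_all add: span_base)
  with assms show ?thesis
    by (simp add: plane_rotation_def reflect_in_span span_add span_mul)
qed

lemma wedge_add_scaleR_right:
  "wedge u1 u2 v (t *\<^sub>R x + y) = t * wedge u1 u2 v x + wedge u1 u2 v y"
  by (simp add: wedge_def inner_add_left algebra_simps)

lemma wedge_plane_rotation:
  "wedge u1 u2 v (plane_rotation u1 u2 \<theta> x) =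
     cos \<theta> * wedge u1 u2 v x + sin \<theta> * ((v \<bullet> u1) * (x \<bullet> u1) + (v \<bullet> u2) * (x \<bullet> u2))"
  by (simp add: wedge_def inner_plane_rotation algebra_simps)

lemma in_span_if_wedge_eq_0:
  assumes "v \<in> span {u1, u2}" "x \<in> span {u1, u2}" "v \<noteq> 0" "wedge u1 u2 v x = 0"
  shows "x \<in> span {v}"
proof -
  obtain p q where v: "v = p *\<^sub>R u1 + q *\<^sub>R u2"
    using assms(1) by (auto simp: span_pair_explicit)
  obtain a b where x: "x = a *\<^sub>R u1 + b *\<^sub>R u2"
    using assms(2) by (auto simp: span_pair_explicit)
  have cross: "p * b = q * a"
    using assms(4) by (simp add: wedge_def v x inner_add_left)
  have pq: "p^2 + q^2 \<noteq> 0" using assms(3) v by (auto simp: sum_power2_eq_zero_iff)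
  define k where "k = (p * a + q * b) / (p^2 + q^2)"
  have "(p * a + q * b) * p = a * (p^2 + q^2)" "(p * a + q * b) * q = b * (p^2 + q^2)"
    using cross by (simp_all add: power2_eq_square) algebra+
  then have "a = k * p" "b = k * q"
    using pq by (simp_all add: k_def field_simps)
  then have "x = k *\<^sub>R v" by (simp add: x v algebra_simps)
  then show ?thesis by (simp add: span_base span_mul)
qed

lemma exists_plane_rotation_onto_lines:
  assumes plane: "v1 \<in> span {u1, u2}" "v2 \<in> span {u1, u2}" "v3 \<in> span {u1, u2}"
      "a \<in> span {u1, u2}" "b \<in> span {u1, u2}"
    and nonzero: "v1 \<noteq> 0" "v2 \<noteq> 0" "v3 \<noteq> 0"
    and not_collinear: "\<not> {v2, v3} \<subseteq> span {v1}"
  obtains \<theta> t where "t *\<^sub>R v1 + plane_rotation u1 u2 \<theta> a \<in> span {v2}"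
    "t *\<^sub>R v1 + plane_rotation u1 u2 \<theta> b \<in> span {v3}"
proof -
  have "wedge u1 u2 v2 v1 \<noteq> 0 \<or> wedge u1 u2 v3 v1 \<noteq> 0"
  proof (rule ccontr)
    assume "\<not> ?thesis"
    then have "wedge u1 u2 v1 v2 = 0" "wedge u1 u2 v1 v3 = 0"
      by (simp_all add: wedge_def algebra_simps)
    then show False
      using not_collinear in_span_if_wedge_eq_0 plane nonzero by blast
  qed
  then obtain \<theta> t where
    "t * wedge u1 u2 v2 v1 + wedge u1 u2 v2 a * cos \<theta> +
       ((v2 \<bullet> u1) * (a \<bullet> u1) + (v2 \<bullet> u2) * (a \<bullet> u2)) * sin \<theta> = 0"
    "t * wedge u1 u2 v3 v1 + wedge u1 u2 v3 b * cos \<theta> +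
       ((v3 \<bullet> u1) * (b \<bullet> u1) + (v3 \<bullet> u2) * (b \<bullet> u2)) * sin \<theta> = 0"
    by (rule exists_angle_solving_pair)
  then have "wedge u1 u2 v2 (t *\<^sub>R v1 + plane_rotation u1 u2 \<theta> a) = 0"
    "wedge u1 u2 v3 (t *\<^sub>R v1 + plane_rotation u1 u2 \<theta> b) = 0"
    by (simp_all add: wedge_add_scaleR_right wedge_plane_rotation algebra_simps)
  moreover have "t *\<^sub>R v1 + plane_rotation u1 u2 \<theta> a \<in> span {u1, u2}"
    "t *\<^sub>R v1 + plane_rotation u1 u2 \<theta> b \<in> span {u1, u2}"
    using plane by (simp_all add: span_add span_mul plane_rotation_in_plane)
  ultimately show ?thesis
    using that in_span_if_wedge_eq_0 plane nonzero by blast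
qed

lemma orthogonal_transformation_into_plane:
  fixes w1 w2 :: 'a
  obtains f where "orthogonal_transformation f" "f w1 \<in> span {u1, u2}" "f w2 \<in> span {u1, u2}"
proof -
  obtain f1 where f1: "orthogonal_transformation f1" "f1 w1 = norm w1 *\<^sub>R u1"
    by (rule orthogonal_transformation_exchange[of w1 "norm w1 *\<^sub>R u1"]) (simp_all add: norm_u1)
  define y where "y = f1 w2"
  define y' where "y' = y - (y \<bullet> u1) *\<^sub>R u1"
  obtain f2 where f2: "orthogonal_transformation f2" "f2 y' = norm y' *\<^sub>R u2"
      "\<And>z. z \<bullet> y' = 0 \<Longrightarrow> z \<bullet> (norm y' *\<^sub>R u2) = 0 \<Longrightarrow> f2 z = z"
    by (rule orthogonal_transformation_exchange[of y' "norm y' *\<^sub>R u2"]) (simp_all add: norm_u2)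
  have "f2 u1 = u1"
    by (intro f2(3)) (simp_all add: y'_def inner_diff_right inner_commute)
  interpret f2: linear f2 using f2(1) orthogonal_transformation by blast
  have "f2 (f1 w1) = norm w1 *\<^sub>R u1"
    by (simp add: f1(2) f2.scale \<open>f2 u1 = u1\<close>)
  moreover have "f2 (f1 w2) = norm y' *\<^sub>R u2 + (y \<bullet> u1) *\<^sub>R u1"
  proof -
    have "f1 w2 = y' + (y \<bullet> u1) *\<^sub>R u1" by (simp add: y'_def y_def)
    then show ?thesis by (simp add: f2.add f2.scale f2(2) \<open>f2 u1 = u1\<close>)
  qed
  ultimately show ?thesis
    using that[of "f2 \<circ> f1"] f1(1) f2(1)
    by (simp add: orthogonal_transformation_compose span_add span_mul span_base)
qed

end

lemma rotation_into_plane: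
  fixes u1 u2 w1 w2 :: "real^'n"
  assumes "orthonormal_pair u1 u2"
  obtains f where "orthogonal_transformation f" "det (matrix f) = 1"
    "f w1 \<in> span {u1, u2}" "f w2 \<in> span {u1, u2}"
proof -
  interpret orthonormal_pair u1 u2 by (rule assms)
  obtain f where f: "orthogonal_transformation f" "f w1 \<in> span {u1, u2}" "f w2 \<in> span {u1, u2}"
    using orthogonal_transformation_into_plane by blast
  have "linear f" using f(1) orthogonal_transformation by blast
  consider "det (matrix f) = 1" | "det (matrix f) = -1"
    using orthogonal_transformation_det[OF f(1)] by linarith
  then show ?thesis
  proof cases
    case 1
    then show ?thesis using that f by blast
  next
    case 2
    \<comment> \<open>the reflection in \<open>u2\<close> maps the plane to itself and corrects the orientation\<close>
    have "u2 \<in> span {u1, u2}" by (simp add: span_base)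
    then show ?thesis
      using that[of "reflect u2 \<circ> f"] f 2 \<open>linear f\<close>
      by (simp add: orthogonal_transformation_compose orthogonal_transformation_reflect norm_u2
          matrix_compose linear_reflect det_mul det_matrix_reflect reflect_in_span)
  qed
qed

lemma det_matrix_plane_rotation:
  fixes u1 u2 :: "real^'n"
  assumes "orthonormal_pair u1 u2"
  shows "det (matrix (plane_rotation u1 u2 \<theta>)) = 1"
proof -
  interpret orthonormal_pair u1 u2 by (rule assms)
  show ?thesis
    by (simp add: plane_rotation_def matrix_compose linear_reflect det_mul det_matrix_reflect
        norm_unit_in_plane norm_u1)
qed

lemma orthonormal_pair_spanning:
  fixes S :: "'a::euclidean_space set"
  assumes "dim S = 2"
  obtains u1 u2 where "orthonormal_pair u1 u2" "span {u1, u2} = span S"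
proof -
  obtain B where B: "pairwise orthogonal B" "\<And>x. x \<in> B \<Longrightarrow> norm x = 1"
      "card B = dim (span S)" "span B = span S"
    using orthonormal_basis_subspace[OF subspace_span[of S]] by metis
  have "card B = 2" using B(3) assms by simp
  then obtain u1 u2 where "B = {u1, u2}" "u1 \<noteq> u2"
    unfolding card_2_iff by blast
  with B(1,2) have "orthonormal_pair u1 u2"
    by unfold_locales (auto simp: pairwise_def orthogonal_def)
  with B(4) \<open>B = {u1, u2}\<close> show ?thesis using that by blast
qed

lemma rigid_motion_onto_coplanar_lines:
  fixes v1 v2 v3 z1 z2 z3 :: "real^'n"
  assumes nonzero: "v1 \<noteq> 0" "v2 \<noteq> 0" "v3 \<noteq> 0" and coplanar: "dim {v1, v2, v3} = 2"
  obtains g where "rigid_motion g" "g z1 \<in> span {v1}" "g z2 \<in> span {v2}" "g z3 \<in> span {v3}"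
proof -
  obtain u1 u2 where "orthonormal_pair u1 u2" and plane: "span {u1, u2} = span {v1, v2, v3}"
    using orthonormal_pair_spanning coplanar by blast
  interpret orthonormal_pair u1 u2 by fact
  have not_collinear: "\<not> {v2, v3} \<subseteq> span {v1}"
  proof
    assume "{v2, v3} \<subseteq> span {v1}"
    then have "dim {v1, v2, v3} \<le> dim {v1}"
      by (metis dim_subset dim_span insert_subset span_superset subset_insertI)
    then show False using coplanar dim_le_card'[of "{v1}"] by simp
  qed
  obtain f where f: "orthogonal_transformation f" "det (matrix f) = 1"
      "f (z2 - z1) \<in> span {u1, u2}" "f (z3 - z1) \<in> span {u1, u2}"
    using rotation_into_plane \<open>orthonormal_pair u1 u2\<close> by blast
  have "v1 \<in> span {u1, u2}" "v2 \<in> span {u1, u2}" "v3 \<in> span {u1, u2}"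
    unfolding plane by (simp_all add: span_base)
  then obtain \<theta> t where \<theta>t:
      "t *\<^sub>R v1 + plane_rotation u1 u2 \<theta> (f (z2 - z1)) \<in> span {v2}"
      "t *\<^sub>R v1 + plane_rotation u1 u2 \<theta> (f (z3 - z1)) \<in> span {v3}"
    by (rule exists_plane_rotation_onto_lines[OF _ _ _ f(3,4) nonzero not_collinear])
  define h where "h = plane_rotation u1 u2 \<theta> \<circ> f"
  have h: "orthogonal_transformation h" "det (matrix h) = 1"
    using f orthogonal_transformation_plane_rotation
        det_matrix_plane_rotation[OF \<open>orthonormal_pair u1 u2\<close>]
    by (simp_all add: h_def orthogonal_transformation_compose matrix_compose det_mul
        orthogonal_transformation_linear)
  define g where "g x = h x + (t *\<^sub>R v1 - h z1)" for x
  have g: "g z = t *\<^sub>R v1 + h (z - z1)" for z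
    using h(1) by (simp add: g_def orthogonal_transformation_linear linear_diff)
  show ?thesis
  proof (rule that)
    show "rigid_motion g" unfolding rigid_motion_iff g_def using h by blast
    show "g z1 \<in> span {v1}"
      using h(1) by (simp add: g orthogonal_transformation_linear linear_0 span_mul span_base)
    show "g z2 \<in> span {v2}" "g z3 \<in> span {v3}"
      using \<theta>t by (simp_all add: g h_def)
  qed
qed

lemma zero_if_sum_on_independent_lines:
  fixes v1 v2 v3 :: "'a::euclidean_space"
  assumes dim3: "dim {v1, v2, v3} = 3"
    and "x1 \<in> span {v1}" "x2 \<in> span {v2}" "x3 \<in> span {v3}" and "x1 + x2 + x3 = 0"
  shows "x1 = 0 \<and> x2 = 0 \<and> x3 = 0"
proof -
  have "card {v1, v2, v3} \<le> 3" by (simp add: card_insert_le_m1)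
  then have "card {v1, v2, v3} = 3"
    using dim3 dim_le_card'[of "{v1, v2, v3}"] by simp
  then have distinct: "v1 \<noteq> v2" "v1 \<noteq> v3" "v2 \<noteq> v3"
    by (auto simp: card_insert_if split: if_splits)
  have "independent {v1, v2, v3}"
    using card_eq_dim[of "{v1, v2, v3}" "span {v1, v2, v3}"] \<open>card {v1, v2, v3} = 3\<close> dim3
    by (simp add: span_superset)
  obtain c1 c2 c3 where "x1 = c1 *\<^sub>R v1" "x2 = c2 *\<^sub>R v2" "x3 = c3 *\<^sub>R v3"
    using assms(2-4) by (auto simp: span_singleton)
  define c where "c v = (if v = v1 then c1 else if v = v2 then c2 else c3)" for v
  have "(\<Sum>v\<in>{v1, v2, v3}. c v *\<^sub>R v) = 0"
    using assms(5) distinct \<open>x1 = _\<close> \<open>x2 = _\<close> \<open>x3 = _\<close> by (simp add: c_def add.assoc)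
  then have "\<forall>v\<in>{v1, v2, v3}. c v = 0"
    using \<open>independent {v1, v2, v3}\<close> unfolding independent_explicit by blast
  then have "c1 = 0" "c2 = 0" "c3 = 0" using distinct by (auto simp: c_def)
  then show ?thesis using \<open>x1 = _\<close> \<open>x2 = _\<close> \<open>x3 = _\<close> by simp
qed

lemma two_le_dim_if_rigid_image:
  fixes g :: "real^'n \<Rightarrow> real^'n"
  assumes "rigid_motion g" "subspace S" "g 0 \<in> S" "g a \<in> S" "g b \<in> S"
    and "a \<bullet> b = 0" "a \<noteq> 0" "b \<noteq> 0"
  shows "2 \<le> dim S"
proof -
  obtain f T where f: "orthogonal_transformation f" "\<forall>x. g x = f x + T"
    using assms(1) unfolding rigid_motion_iff by blast
  then have "f 0 = 0" by (simp add: orthogonal_transformation_linear linear_0)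
  then have "f a = g a - g 0" "f b = g b - g 0" using f(2) by simp_all
  then have "{f a, f b} \<subseteq> S" using assms(2-5) by (simp add: subspace_diff)
  have "f a \<bullet> f b = 0" using f(1) assms(6) by (simp add: orthogonal_transformation_def)
  moreover have "f a \<noteq> 0" "f b \<noteq> 0"
    using assms(7,8) orthogonal_transformation_norm[OF f(1), of a]
      orthogonal_transformation_norm[OF f(1), of b] by auto
  ultimately have "independent {f a, f b}"
    by (intro pairwise_orthogonal_independent) (auto simp: pairwise_def orthogonal_def inner_commute)
  moreover have "f a \<noteq> f b" using \<open>f a \<bullet> f b = 0\<close> \<open>f a \<noteq> 0\<close> by auto
  ultimately show ?thesis
    using independent_card_le_dim[OF \<open>{f a, f b} \<subseteq> S\<close>] by simp
qed

lemma dim_ne_3_if_collinear_rigid_image: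
  fixes g :: "real^'n \<Rightarrow> real^'n"
  assumes g: "rigid_motion g" "g 0 \<in> span {v1}" "g a \<in> span {v2}" "g (a + a) \<in> span {v3}"
    and "a \<noteq> 0"
  shows "dim {v1, v2, v3} \<noteq> 3"
proof
  assume "dim {v1, v2, v3} = 3"
  obtain f T where f: "orthogonal_transformation f" "\<forall>x. g x = f x + T"
    using g(1) unfolding rigid_motion_iff by blast
  have "linear f" using f(1) by (simp add: orthogonal_transformation_linear)
  have "f 0 = 0" "f (a + a) = f a + f a"
    using \<open>linear f\<close> by (simp_all only: linear_0 linear_add)
  then have "g 0 + - (g a + g a) + g (a + a) = 0"
    by (simp only: f(2)[rule_format]) (simp add: algebra_simps)
  moreover have "- (g a + g a) \<in> span {v2}" using g(3) by (intro span_neg span_add)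
  ultimately have "g 0 = 0" "- (g a + g a) = 0"
    using zero_if_sum_on_independent_lines[OF \<open>dim {v1, v2, v3} = 3\<close> g(2) _ g(4)] by blast+
  then have "g 0 = 0" "g a = 0"
    by (metis scaleR_2 scaleR_eq_0_iff neg_equal_0_iff_equal zero_neq_numeral)+
  then have "f a = 0" using f(2) \<open>linear f\<close> by (simp add: linear_0)
  then show False
    using \<open>a \<noteq> 0\<close> orthogonal_transformation_norm[OF f(1), of a] by auto
qed

lemma coplanar_if_rigid_motions_onto_lines:
  fixes v1 v2 v3 :: "real^'n"
  assumes "CARD('n) \<ge> 2" "v1 \<noteq> 0"
    and movable: "\<forall>z1 z2 z3. \<exists>g. rigid_motion g \<and>
       g z1 \<in> span {v1} \<and> g z2 \<in> span {v2} \<and> g z3 \<in> span {v3}"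
  shows "dim {v1, v2, v3} = 2"
proof -
  have "\<not> (\<forall>i\<in>UNIV. \<forall>j\<in>UNIV. i = (j::'n))"
    using assms(1) card_le_Suc0_iff_eq[of "UNIV :: 'n set"] by auto
  then obtain i j :: 'n where "i \<noteq> j" by blast
  have "2 \<le> dim {v1, v2, v3}"
  proof -
    obtain g where g: "rigid_motion g"
        "g 0 \<in> span {v1}" "g (axis i 1) \<in> span {v2}" "g (axis j 1) \<in> span {v3}"
      using movable by blast
    have "span {v1} \<union> span {v2} \<union> span {v3} \<subseteq> span {v1, v2, v3}"
      by (auto intro: span_mono[THEN subsetD])
    with g \<open>i \<noteq> j\<close> have "2 \<le> dim (span {v1, v2, v3})"
      by (intro two_le_dim_if_rigid_image[of g "span {v1, v2, v3}" "axis i 1" "axis j 1"])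
         (auto simp: inner_axis_axis)
    then show ?thesis by simp
  qed
  moreover have "dim {v1, v2, v3} \<noteq> 3"
  proof -
    obtain g where "rigid_motion g" "g 0 \<in> span {v1}" "g (axis i 1) \<in> span {v2}"
        "g (axis i 1 + axis i 1) \<in> span {v3}"
      using movable by blast
    then show ?thesis by (rule dim_ne_3_if_collinear_rigid_image) simp
  qed
  moreover have "dim {v1, v2, v3} \<le> 3"
    by (rule order_trans[OF dim_le_card']) (simp_all add: card_insert_le_m1)
  ultimately show ?thesis by linarith
qed

theorem proposition3p4:
  fixes l1 l2 l3 :: "(real^'n) set"
  assumes "CARD('n) \<ge> 2"
    and "line_through_origin l1" and "line_through_origin l2" and "line_through_origin l3"
  shows "dim {x + y + z | x y z. x \<in> l1 \<and> y \<in> l2 \<and> z \<in> l3} = 2 \<longleftrightarrow>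
         (\<forall>z1 z2 z3 :: real^'n. \<exists>g. rigid_motion g \<and> g z1 \<in> l1 \<and> g z2 \<in> l2 \<and> g z3 \<in> l3)"
proof -
  obtain v1 v2 v3 where v: "v1 \<noteq> 0" "v2 \<noteq> 0" "v3 \<noteq> 0"
      and l: "l1 = span {v1}" "l2 = span {v2}" "l3 = span {v3}"
    using assms(2-4) unfolding line_through_origin_def by metis
  have "dim {x + y + z | x y z. x \<in> l1 \<and> y \<in> l2 \<and> z \<in> l3} = dim {v1, v2, v3}"
    by (simp add: l sum_of_lines_eq_span)
  moreover note coplanar_if_rigid_motions_onto_lines[OF assms(1) v(1), of v2 v3]
  moreover have "dim {v1, v2, v3} = 2 \<Longrightarrow>
      \<forall>z1 z2 z3. \<exists>g. rigid_motion g \<and> g z1 \<in> l1 \<and> g z2 \<in> l2 \<and> g z3 \<in> l3"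
    unfolding l using rigid_motion_onto_coplanar_lines[OF v] by metis
  ultimately show ?thesis unfolding l by argo
qed

end
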